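(* If $\Gamma\vdash t:A$ is derivable in the simply typed distributive $\lambda$-calculus, then $t$ is strongly normalizing with respect to $\to_{\mathsf{dist}}$.
   Context: Terms: $t,s,u ::= x \mid \lambda x.t \mid ts \mid \langle t,s\rangle \mid \pi_1 t \mid \pi_2 t$ (up to $\alpha$-renaming); $t\{x:=s\}$ is capture-avoiding substitution. Top-level rules: $(\lambda x.t)s \mapsto t\{x:=s\}$; $\pi_i\langle t_1,t_2\rangle \mapsto t_i$ ($i=1,2$); $\langle t,s\rangle u \mapsto \langle tu, su\rangle$; $\pi_i(\lambda x.t)\mapsto \lambda x.\pi_i t$ ($i=1,2$); $\to_{\mathsf{dist}}$ is the closure of these rules under all term constructors. Types: $A ::= \tau \mid A\Rightarrow A \mid A\wedge A$ with $\tau$ a single atomic type. The relation $\equiv$ on types is the smallest equivalence relation containing $A\Rightarrow (B\wedge C)\equiv (A\Rightarrow B)\wedge(A\Rightarrow C)$ for all $A,B,C$ and closed under congruence for $\Rightarrow$ and $\wedge$ in both arguments. Typing rules: $\Gamma,x:A\vdash x:A$; if $\Gamma\vdash t:A$ and $A\equiv B$ then $\Gamma\vdash t:B$; if $\Gamma,x:A\vdash t:B$ then $\Gamma\vdash \lambda x.t:A\Rightarrow B$; if $\Gamma\vdash t:A\Rightarrow B$ and $\Gamma\vdash s:A$ then $\Gamma\vdash ts:B$; if $\Gamma\vdash t:A$ and $\Gamma\vdash s:B$ then $\Gamma\vdash\langle t,s\rangle:A\wedge B$; if $\Gamma\vdash t:A\wedge B$ then $\Gamma\vdash\pi_1 t:A$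 and $\Gamma\vdash \pi_2 t:B$. *)

theory Defs
  imports Main
begin

text \<open>Terms up to alpha-renaming, represented with de Bruijn indices.\<close>
datatype dterm =
    Var nat
  | Lam dterm
  | App dterm dterm
  | Pair dterm dterm
  | Proj1 dterm
  | Proj2 dterm

primrec lift :: "dterm \<Rightarrow> nat \<Rightarrow> dterm" where
  "lift (Var i) k = (if i < k then Var i else Var (i + 1))"
| "lift (Lam t) k = Lam (lift t (k + 1))"
| "lift (App t s) k = App (lift t k) (lift s k)"
| "lift (Pair t s) k = Pair (lift t k) (lift s k)"
| "lift (Proj1 t) k = Proj1 (lift t k)"
| "lift (Proj2 t) k = Proj2 (lift t k)"

text \<open>Capture-avoiding substitution: subst t s k replaces index k by s
  and decrements the free indices above k.\<close>
primrec subst :: "dterm \<Rightarrow> dterm \<Rightarrow> nat \<Rightarrow> dterm" where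
  "subst (Var i) s k = (if k < i then Var (i - 1) else if i = k then s else Var i)"
| "subst (Lam t) s k = Lam (subst t (lift s 0) (k + 1))"
| "subst (App t u) s k = App (subst t s k) (subst u s k)"
| "subst (Pair t u) s k = Pair (subst t s k) (subst u s k)"
| "subst (Proj1 t) s k = Proj1 (subst t s k)"
| "subst (Proj2 t) s k = Proj2 (subst t s k)"

inductive dist_step :: "dterm \<Rightarrow> dterm \<Rightarrow> bool" (infixl "\<rightarrow>\<^sub>d" 50) where
  beta:      "App (Lam t) s \<rightarrow>\<^sub>d subst t s 0"
| proj1_pair: "Proj1 (Pair t1 t2) \<rightarrow>\<^sub>d t1"
| proj2_pair: "Proj2 (Pair t1 t2) \<rightarrow>\<^sub>d t2"
| app_pair:  "App (Pair t s) u \<rightarrow>\<^sub>d Pair (App t u) (App s u)"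
| proj1_lam: "Proj1 (Lam t) \<rightarrow>\<^sub>d Lam (Proj1 t)"
| proj2_lam: "Proj2 (Lam t) \<rightarrow>\<^sub>d Lam (Proj2 t)"
| lam:   "t \<rightarrow>\<^sub>d t' \<Longrightarrow> Lam t \<rightarrow>\<^sub>d Lam t'"
| appL:  "t \<rightarrow>\<^sub>d t' \<Longrightarrow> App t s \<rightarrow>\<^sub>d App t' s"
| appR:  "s \<rightarrow>\<^sub>d s' \<Longrightarrow> App t s \<rightarrow>\<^sub>d App t s'"
| pairL: "t \<rightarrow>\<^sub>d t' \<Longrightarrow> Pair t s \<rightarrow>\<^sub>d Pair t' s"
| pairR: "s \<rightarrow>\<^sub>d s' \<Longrightarrow> Pair t s \<rightarrow>\<^sub>d Pair t s'"
| proj1: "t \<rightarrow>\<^sub>d t' \<Longrightarrow> Proj1 t \<rightarrow>\<^sub>d Proj1 t'"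
| proj2: "t \<rightarrow>\<^sub>d t' \<Longrightarrow> Proj2 t \<rightarrow>\<^sub>d Proj2 t'"

text \<open>Strong normalization: every reduction sequence from t is finite
  (t is in the well-founded part of the reduction relation).\<close>
inductive SN :: "dterm \<Rightarrow> bool" where
  SNI: "(\<And>t'. t \<rightarrow>\<^sub>d t' \<Longrightarrow> SN t') \<Longrightarrow> SN t"

datatype type = Atom | Fun type type | Conj type type

inductive type_eq :: "type \<Rightarrow> type \<Rightarrow> bool" (infix "\<equiv>\<^sub>T" 50) where
  dist:  "Fun A (Conj B C) \<equiv>\<^sub>T Conj (Fun A B) (Fun A C)"
| refl:  "A \<equiv>\<^sub>T A"
| sym:   "A \<equiv>\<^sub>T B \<Longrightarrow> B \<equiv>\<^sub>T A"
| trans: "A \<equiv>\<^sub>T B \<Longrightarrow> B \<equiv>\<^sub>T C \<Longrightarrow> A \<equiv>\<^sub>T C"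
| fun_cong:  "A \<equiv>\<^sub>T A' \<Longrightarrow> B \<equiv>\<^sub>T B' \<Longrightarrow> Fun A B \<equiv>\<^sub>T Fun A' B'"
| conj_cong: "A \<equiv>\<^sub>T A' \<Longrightarrow> B \<equiv>\<^sub>T B' \<Longrightarrow> Conj A B \<equiv>\<^sub>T Conj A' B'"

definition cons_env :: "type \<Rightarrow> (nat \<Rightarrow> type) \<Rightarrow> nat \<Rightarrow> type" where
  "cons_env A \<Gamma> = (\<lambda>j. case j of 0 \<Rightarrow> A | Suc n \<Rightarrow> \<Gamma> n)"

inductive typing :: "(nat \<Rightarrow> type) \<Rightarrow> dterm \<Rightarrow> type \<Rightarrow> bool" ("_ \<turnstile> _ : _" [50, 50, 50] 50) where
  var:   "\<Gamma> \<turnstile> Var i : \<Gamma> i"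
| conv:  "\<Gamma> \<turnstile> t : A \<Longrightarrow> A \<equiv>\<^sub>T B \<Longrightarrow> \<Gamma> \<turnstile> t : B"
| abs:   "cons_env A \<Gamma> \<turnstile> t : B \<Longrightarrow> \<Gamma> \<turnstile> Lam t : Fun A B"
| app:   "\<Gamma> \<turnstile> t : Fun A B \<Longrightarrow> \<Gamma> \<turnstile> s : A \<Longrightarrow> \<Gamma> \<turnstile> App t s : B"
| pair:  "\<Gamma> \<turnstile> t : A \<Longrightarrow> \<Gamma> \<turnstile> s : B \<Longrightarrow> \<Gamma> \<turnstile> Pair t s : Conj A B"
| proj1: "\<Gamma> \<turnstile> t : Conj A B \<Longrightarrow> \<Gamma> \<turnstile> Proj1 t : A"
| proj2: "\<Gamma> \<turnstile> t : Conj A B \<Longrightarrow> \<Gamma> \<turnstile> Proj2 t : B"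

end

theory Submission
  imports Defs
begin

(* Tait-Girard reducibility. A type is interpreted as a reducibility candidate: arrows as
   the function space, conjunctions as the product of candidates. To make the interpretation
   invariant under type equivalence, a type is first normalised by pushing arrows under
   conjunctions, A => (B /\ C) becoming (A => B) /\ (A => C). The distributive reduction
   rules are what make this sound: a term of type A => (B /\ C) is reducible iff both of its
   projections are, and the rules pi_i (lambda x. t) -> lambda x. pi_i t and
   <t, s> u -> <t u, s u> let abstractions and applications at such a type be shown
   reducible one projection at a time. *)

section \<open>De Bruijn substitution\<close>

lemma lift_lift: "i < k + 1 \<Longrightarrow> lift (lift t i) (Suc k) = lift (lift t k) i"
  by (induct t arbitrary: i k) auto

lemma lift_subst_lt: "i < j + 1 \<Longrightarrow> lift (subst t s j) i = subst (lift t i) (lift s i) (j + 1)"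
  by (induct t arbitrary: i j s) (auto simp: lift_lift)

lemma subst_lift [simp]: "subst (lift t k) s k = t"
  by (induct t arbitrary: k s) simp_all

lemma subst_subst:
  "i < j + 1 \<Longrightarrow> subst (subst t (lift v i) (Suc j)) (subst u v j) i = subst (subst t u i) v j"
  by (induct t arbitrary: i j u v)
    (simp_all add: diff_Suc lift_lift [symmetric] lift_subst_lt split: nat.split)

lemma step_subst: "t \<rightarrow>\<^sub>d t' \<Longrightarrow> subst t s k \<rightarrow>\<^sub>d subst t' s k"
proof (induction arbitrary: s k rule: dist_step.induct)
  case (beta t u)
  have "subst (App (Lam t) u) s k \<rightarrow>\<^sub>d subst (subst t (lift s 0) (Suc k)) (subst u s k) 0"
    by (simp add: dist_step.beta)
  then show ?case using subst_subst [of 0 k t s u] by simp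
qed (auto intro: dist_step.intros)

definition shift :: "(nat \<Rightarrow> dterm) \<Rightarrow> nat \<Rightarrow> dterm" where
  "shift \<sigma> = (\<lambda>i. case i of 0 \<Rightarrow> Var 0 | Suc j \<Rightarrow> lift (\<sigma> j) 0)"

definition scons :: "dterm \<Rightarrow> (nat \<Rightarrow> dterm) \<Rightarrow> nat \<Rightarrow> dterm" where
  "scons s \<sigma> = (\<lambda>i. case i of 0 \<Rightarrow> s | Suc j \<Rightarrow> \<sigma> j)"

primrec psubst :: "dterm \<Rightarrow> (nat \<Rightarrow> dterm) \<Rightarrow> dterm" where
  "psubst (Var i) \<sigma> = \<sigma> i"
| "psubst (Lam t) \<sigma> = Lam (psubst t (shift \<sigma>))"
| "psubst (App t s) \<sigma> = App (psubst t \<sigma>) (psubst s \<sigma>)"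
| "psubst (Pair t s) \<sigma> = Pair (psubst t \<sigma>) (psubst s \<sigma>)"
| "psubst (Proj1 t) \<sigma> = Proj1 (psubst t \<sigma>)"
| "psubst (Proj2 t) \<sigma> = Proj2 (psubst t \<sigma>)"

lemma shift_Var: "shift Var = Var"
  by (auto simp: shift_def split: nat.split)

lemma psubst_Var: "psubst t Var = t"
  by (induct t) (simp_all add: shift_Var)

lemma subst_shift: "(\<lambda>i. subst (shift \<sigma> i) (lift s 0) (Suc k)) = shift (\<lambda>i. subst (\<sigma> i) s k)"
  by (auto simp: shift_def lift_subst_lt split: nat.split)

lemma subst_psubst: "subst (psubst t \<sigma>) s k = psubst t (\<lambda>i. subst (\<sigma> i) s k)"
  by (induct t arbitrary: \<sigma> s k) (simp_all add: subst_shift)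

lemma subst_psubst_shift: "subst (psubst t (shift \<sigma>)) s 0 = psubst t (scons s \<sigma>)"
proof -
  have "(\<lambda>i. subst (shift \<sigma> i) s 0) = scons s \<sigma>"
    by (auto simp: shift_def scons_def split: nat.split)
  then show ?thesis by (simp add: subst_psubst)
qed

section \<open>Strong normalisation\<close>

inductive_cases step_VarE: "Var i \<rightarrow>\<^sub>d t'"
inductive_cases step_LamE: "Lam t \<rightarrow>\<^sub>d t'"
inductive_cases step_AppE [consumes 1, case_names beta app_pair appL appR]: "App t s \<rightarrow>\<^sub>d t'"
inductive_cases step_PairE: "Pair t s \<rightarrow>\<^sub>d t'"
inductive_cases step_Proj1E [consumes 1, case_names pair lam proj]: "Proj1 t \<rightarrow>\<^sub>d t'"
inductive_cases step_Proj2E [consumes 1, case_names pair lam proj]: "Proj2 t \<rightarrow>\<^sub>d t'"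

lemma SN_step: "SN t \<Longrightarrow> t \<rightarrow>\<^sub>d t' \<Longrightarrow> SN t'"
  by (auto elim: SN.cases)

lemma SN_preimage:
  assumes mono: "\<And>t t'. t \<rightarrow>\<^sub>d t' \<Longrightarrow> f t \<rightarrow>\<^sub>d f t'" and "SN (f t)"
  shows "SN t"
proof -
  have "SN u \<Longrightarrow> u = f t \<Longrightarrow> SN t" for u
    by (induction arbitrary: t rule: SN.induct) (metis SN.SNI mono)
  then show ?thesis using \<open>SN (f t)\<close> by blast
qed

lemma SN_induct2 [consumes 2, case_names step]:
  assumes "SN a" and "SN b"
    and step: "\<And>a b. (\<And>a'. a \<rightarrow>\<^sub>d a' \<Longrightarrow> P a' b) \<Longrightarrow> (\<And>b'. b \<rightarrow>\<^sub>d b' \<Longrightarrow> P a b') \<Longrightarrow> P a b"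
  shows "P a b"
  using assms(1,2)
proof (induction arbitrary: b rule: SN.induct)
  case (SNI a)
  from \<open>SN b\<close> show ?case
    by (induction rule: SN.induct) (metis SNI.IH SN.SNI step)
qed

section \<open>Reducibility candidates\<close>

fun neutral :: "dterm \<Rightarrow> bool" where
  "neutral (Lam _) = False"
| "neutral (Pair _ _) = False"
| "neutral _ = True"

definition CR :: "dterm set \<Rightarrow> bool" where
  "CR R \<longleftrightarrow> (\<forall>t\<in>R. SN t) \<and> (\<forall>t\<in>R. \<forall>t'. t \<rightarrow>\<^sub>d t' \<longrightarrow> t' \<in> R)
     \<and> (\<forall>t. neutral t \<longrightarrow> (\<forall>t'. t \<rightarrow>\<^sub>d t' \<longrightarrow> t' \<in> R) \<longrightarrow> t \<in> R)"

lemma CRI: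
  assumes "\<And>t. t \<in> R \<Longrightarrow> SN t"
    and "\<And>t t'. t \<in> R \<Longrightarrow> t \<rightarrow>\<^sub>d t' \<Longrightarrow> t' \<in> R"
    and "\<And>t. neutral t \<Longrightarrow> (\<And>t'. t \<rightarrow>\<^sub>d t' \<Longrightarrow> t' \<in> R) \<Longrightarrow> t \<in> R"
  shows "CR R"
  using assms unfolding CR_def by blast

lemma CR_SN: "CR R \<Longrightarrow> t \<in> R \<Longrightarrow> SN t"
  unfolding CR_def by blast

lemma CR_step: "CR R \<Longrightarrow> t \<in> R \<Longrightarrow> t \<rightarrow>\<^sub>d t' \<Longrightarrow> t' \<in> R"
  unfolding CR_def by blast

lemma CR_neutral: "CR R \<Longrightarrow> neutral t \<Longrightarrow> (\<And>t'. t \<rightarrow>\<^sub>d t' \<Longrightarrow> t' \<in> R) \<Longrightarrow> t \<in> R"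
  unfolding CR_def by blast

lemma CR_Var: "CR R \<Longrightarrow> Var i \<in> R"
  by (erule CR_neutral) (auto elim: step_VarE)

definition arrow_red :: "dterm set \<Rightarrow> dterm set \<Rightarrow> dterm set" where
  "arrow_red R S = {t. \<forall>s\<in>R. App t s \<in> S}"

definition conj_red :: "dterm set \<Rightarrow> dterm set \<Rightarrow> dterm set" where
  "conj_red R S = {t. Proj1 t \<in> R \<and> Proj2 t \<in> S}"

lemma CR_SN_set: "CR {t. SN t}"
  by (rule CRI) (auto intro: SN.SNI SN_step)

lemma CR_arrow_red:
  assumes R: "CR R" and S: "CR S"
  shows "CR (arrow_red R S)"
proof (rule CRI)
  fix t assume "t \<in> arrow_red R S"
  then have "SN (App t (Var 0))"
    using CR_Var [OF R] CR_SN [OF S] by (auto simp: arrow_red_def)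
  then show "SN t"
    by (rule SN_preimage [rotated]) (rule dist_step.appL)
next
  fix t t' assume "t \<in> arrow_red R S" "t \<rightarrow>\<^sub>d t'"
  then show "t' \<in> arrow_red R S"
    using CR_step [OF S] by (auto simp: arrow_red_def intro: dist_step.appL)
next
  fix t assume t: "neutral t" and reducts: "\<And>t'. t \<rightarrow>\<^sub>d t' \<Longrightarrow> t' \<in> arrow_red R S"
  have "App t s \<in> S" if "SN s" "s \<in> R" for s
    using that
  proof (induction rule: SN.induct)
    case (SNI s)
    show ?case
    proof (rule CR_neutral [OF S])
      fix w assume "App t s \<rightarrow>\<^sub>d w"
      then show "w \<in> S"
        by (cases rule: step_AppE)
          (use t reducts SNI CR_step [OF R] in \<open>auto simp: arrow_red_def\<close>)
    qed simp
  qed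
  then show "t \<in> arrow_red R S"
    using CR_SN [OF R] by (auto simp: arrow_red_def)
qed

lemma CR_conj_red:
  assumes R: "CR R" and S: "CR S"
  shows "CR (conj_red R S)"
proof (rule CRI)
  fix t assume "t \<in> conj_red R S"
  then have "SN (Proj1 t)"
    using CR_SN [OF R] by (auto simp: conj_red_def)
  then show "SN t"
    by (rule SN_preimage [rotated]) (rule dist_step.proj1)
next
  fix t t' assume "t \<in> conj_red R S" "t \<rightarrow>\<^sub>d t'"
  then show "t' \<in> conj_red R S"
    using CR_step [OF R] CR_step [OF S]
    by (simp add: conj_red_def) (metis dist_step.proj1 dist_step.proj2)
next
  fix t assume t: "neutral t" and reducts: "\<And>t'. t \<rightarrow>\<^sub>d t' \<Longrightarrow> t' \<in> conj_red R S"
  have "Proj1 t \<in> R"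
  proof (rule CR_neutral [OF R])
    fix w assume "Proj1 t \<rightarrow>\<^sub>d w"
    then show "w \<in> R"
      by (cases rule: step_Proj1E) (use t reducts in \<open>auto simp: conj_red_def\<close>)
  qed simp
  moreover have "Proj2 t \<in> S"
  proof (rule CR_neutral [OF S])
    fix w assume "Proj2 t \<rightarrow>\<^sub>d w"
    then show "w \<in> S"
      by (cases rule: step_Proj2E) (use t reducts in \<open>auto simp: conj_red_def\<close>)
  qed simp
  ultimately show "t \<in> conj_red R S"
    by (simp add: conj_red_def)
qed

lemma Proj1_Pair_mem:
  assumes R: "CR R" and "a \<in> R" "SN b"
  shows "Proj1 (Pair a b) \<in> R"
  using CR_SN [OF R \<open>a \<in> R\<close>] \<open>SN b\<close> \<open>a \<in> R\<close>
proof (induction a b rule: SN_induct2)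
  case (step a b)
  show ?case
  proof (rule CR_neutral [OF R])
    fix w assume "Proj1 (Pair a b) \<rightarrow>\<^sub>d w"
    then show "w \<in> R"
      by (cases rule: step_Proj1E) (use step CR_step [OF R] in \<open>auto elim: step_PairE\<close>)
  qed simp
qed

lemma Proj2_Pair_mem:
  assumes S: "CR S" and "SN a" "b \<in> S"
  shows "Proj2 (Pair a b) \<in> S"
  using \<open>SN a\<close> CR_SN [OF S \<open>b \<in> S\<close>] \<open>b \<in> S\<close>
proof (induction a b rule: SN_induct2)
  case (step a b)
  show ?case
  proof (rule CR_neutral [OF S])
    fix w assume "Proj2 (Pair a b) \<rightarrow>\<^sub>d w"
    then show "w \<in> S"
      by (cases rule: step_Proj2E) (use step CR_step [OF S] in \<open>auto elim: step_PairE\<close>)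
  qed simp
qed

lemma Pair_mem_conj_red:
  "CR R \<Longrightarrow> CR S \<Longrightarrow> a \<in> R \<Longrightarrow> b \<in> S \<Longrightarrow> Pair a b \<in> conj_red R S"
  by (simp add: conj_red_def Proj1_Pair_mem Proj2_Pair_mem CR_SN)

lemma Proj1_Lam_mem:
  assumes R: "CR R" and "Lam (Proj1 u) \<in> R"
  shows "Proj1 (Lam u) \<in> R"
proof -
  have "SN u"
    using CR_SN [OF R \<open>Lam (Proj1 u) \<in> R\<close>]
    by (rule SN_preimage [rotated]) (intro dist_step.lam dist_step.proj1)
  then show ?thesis
    using \<open>Lam (Proj1 u) \<in> R\<close>
  proof (induction rule: SN.induct)
    case (SNI u)
    show ?case
    proof (rule CR_neutral [OF R])
      fix w assume "Proj1 (Lam u) \<rightarrow>\<^sub>d w"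
      then show "w \<in> R"
      proof (cases rule: step_Proj1E)
        case lam
        then show ?thesis using SNI.prems by simp
      next
        case (proj v)
        then obtain u' where "v = Lam u'" and "u \<rightarrow>\<^sub>d u'"
          by (auto elim: step_LamE)
        moreover have "Lam (Proj1 u) \<rightarrow>\<^sub>d Lam (Proj1 u')"
          using \<open>u \<rightarrow>\<^sub>d u'\<close> by (intro dist_step.lam dist_step.proj1)
        ultimately show ?thesis
          using proj SNI CR_step [OF R] by blast
      qed simp
    qed simp
  qed
qed

lemma Proj2_Lam_mem:
  assumes R: "CR R" and "Lam (Proj2 u) \<in> R"
  shows "Proj2 (Lam u) \<in> R"
proof -
  have "SN u"
    using CR_SN [OF R \<open>Lam (Proj2 u) \<in> R\<close>]
    by (rule SN_preimage [rotated]) (intro dist_step.lam dist_step.proj2)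
  then show ?thesis
    using \<open>Lam (Proj2 u) \<in> R\<close>
  proof (induction rule: SN.induct)
    case (SNI u)
    show ?case
    proof (rule CR_neutral [OF R])
      fix w assume "Proj2 (Lam u) \<rightarrow>\<^sub>d w"
      then show "w \<in> R"
      proof (cases rule: step_Proj2E)
        case lam
        then show ?thesis using SNI.prems by simp
      next
        case (proj v)
        then obtain u' where "v = Lam u'" and "u \<rightarrow>\<^sub>d u'"
          by (auto elim: step_LamE)
        moreover have "Lam (Proj2 u) \<rightarrow>\<^sub>d Lam (Proj2 u')"
          using \<open>u \<rightarrow>\<^sub>d u'\<close> by (intro dist_step.lam dist_step.proj2)
        ultimately show ?thesis
          using proj SNI CR_step [OF R] by blast
      qed simp
    qed simp
  qed
qed

lemma Proj1_App_mem:
  assumes R: "CR R" and "App (Proj1 t) s \<in> R" and "SN (App (Proj2 t) s)"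
  shows "Proj1 (App t s) \<in> R"
proof -
  have sn: "SN (App (Proj1 t) s)"
    using CR_SN [OF R] assms(2) .
  have "SN t"
    using sn by (rule SN_preimage [rotated]) (intro dist_step.appL dist_step.proj1)
  moreover have "SN s"
    using sn by (rule SN_preimage [rotated]) (rule dist_step.appR)
  ultimately show ?thesis
    using assms(2,3)
  proof (induction t s rule: SN_induct2)
    case (step t s)
    have reducts: "Proj1 w \<in> R" if "App t s \<rightarrow>\<^sub>d w" for w
      using that
    proof (cases rule: step_AppE)
      case (beta u)
      have "App (Proj1 t) s \<rightarrow>\<^sub>d App (Lam (Proj1 u)) s"
        using beta by (simp add: dist_step.appL dist_step.proj1_lam)
      moreover have "App (Lam (Proj1 u)) s \<rightarrow>\<^sub>d Proj1 w"
        using beta dist_step.beta [of "Proj1 u" s] by simp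
      ultimately show ?thesis
        using step.prems(1) by (meson CR_step [OF R])
    next
      case (app_pair a b)
      have "App (Proj1 t) s \<rightarrow>\<^sub>d App a s" and "App (Proj2 t) s \<rightarrow>\<^sub>d App b s"
        using app_pair by (simp_all add: dist_step.appL dist_step.proj1_pair dist_step.proj2_pair)
      then have "App a s \<in> R" and "SN (App b s)"
        using step.prems CR_step [OF R] SN_step by blast+
      then show ?thesis
        using app_pair Proj1_Pair_mem [OF R] by simp
    next
      case (appL t')
      then show ?thesis
        using step.IH(1) step.prems
        by (meson CR_step [OF R] SN_step dist_step.appL dist_step.proj1 dist_step.proj2)
    next
      case (appR s')
      then show ?thesis
        using step.IH(2) step.prems by (meson CR_step [OF R] SN_step dist_step.appR)
    qed
    show ?case
    proof (rule CR_neutral [OF R])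
      fix v assume "Proj1 (App t s) \<rightarrow>\<^sub>d v"
      then show "v \<in> R"
        by (cases rule: step_Proj1E) (auto intro: reducts)
    qed simp
  qed
qed

lemma Proj2_App_mem:
  assumes R: "CR R" and "App (Proj2 t) s \<in> R" and "SN (App (Proj1 t) s)"
  shows "Proj2 (App t s) \<in> R"
proof -
  have sn: "SN (App (Proj2 t) s)"
    using CR_SN [OF R] assms(2) .
  have "SN t"
    using sn by (rule SN_preimage [rotated]) (intro dist_step.appL dist_step.proj2)
  moreover have "SN s"
    using sn by (rule SN_preimage [rotated]) (rule dist_step.appR)
  ultimately show ?thesis
    using assms(2,3)
  proof (induction t s rule: SN_induct2)
    case (step t s)
    have reducts: "Proj2 w \<in> R" if "App t s \<rightarrow>\<^sub>d w" for w
      using that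
    proof (cases rule: step_AppE)
      case (beta u)
      have "App (Proj2 t) s \<rightarrow>\<^sub>d App (Lam (Proj2 u)) s"
        using beta by (simp add: dist_step.appL dist_step.proj2_lam)
      moreover have "App (Lam (Proj2 u)) s \<rightarrow>\<^sub>d Proj2 w"
        using beta dist_step.beta [of "Proj2 u" s] by simp
      ultimately show ?thesis
        using step.prems(1) by (meson CR_step [OF R])
    next
      case (app_pair a b)
      have "App (Proj1 t) s \<rightarrow>\<^sub>d App a s" and "App (Proj2 t) s \<rightarrow>\<^sub>d App b s"
        using app_pair by (simp_all add: dist_step.appL dist_step.proj1_pair dist_step.proj2_pair)
      then have "SN (App a s)" and "App b s \<in> R"
        using step.prems CR_step [OF R] SN_step by blast+
      then show ?thesis
        using app_pair Proj2_Pair_mem [OF R] by simp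
    next
      case (appL t')
      then show ?thesis
        using step.IH(1) step.prems
        by (meson CR_step [OF R] SN_step dist_step.appL dist_step.proj2 dist_step.proj1)
    next
      case (appR s')
      then show ?thesis
        using step.IH(2) step.prems by (meson CR_step [OF R] SN_step dist_step.appR)
    qed
    show ?case
    proof (rule CR_neutral [OF R])
      fix v assume "Proj2 (App t s) \<rightarrow>\<^sub>d v"
      then show "v \<in> R"
        by (cases rule: step_Proj2E) (auto intro: reducts)
    qed simp
  qed
qed

lemma Lam_mem_arrow_red:
  assumes R: "CR R" and S: "CR S" and body: "\<forall>s\<in>R. subst u s 0 \<in> S"
  shows "Lam u \<in> arrow_red R S"
proof -
  have "SN (subst u (Var 0) 0)"
    using body CR_Var [OF R] CR_SN [OF S] by blast
  then have "SN u"
    by (rule SN_preimage [rotated]) (rule step_subst)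
  have "App (Lam u) s \<in> S" if "s \<in> R" for s
    using \<open>SN u\<close> CR_SN [OF R that] body that
  proof (induction u s rule: SN_induct2)
    case (step u s)
    show ?case
    proof (rule CR_neutral [OF S])
      fix w assume "App (Lam u) s \<rightarrow>\<^sub>d w"
      then show "w \<in> S"
      proof (cases rule: step_AppE)
        case (beta u')
        then show ?thesis
          using step.prems by simp
      next
        case (appL v)
        then obtain u' where "v = Lam u'" and "u \<rightarrow>\<^sub>d u'"
          by (auto elim: step_LamE)
        moreover have "\<forall>s\<in>R. subst u' s 0 \<in> S"
          using step.prems(1) \<open>u \<rightarrow>\<^sub>d u'\<close> CR_step [OF S] step_subst by blast
        ultimately show ?thesis
          using appL step.IH(1) step.prems(2) by simp
      next
        case (appR s')
        then show ?thesis
          using step.IH(2) step.prems CR_step [OF R] by simp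
      qed simp
    qed simp
  qed
  then show ?thesis
    by (simp add: arrow_red_def)
qed

section \<open>Interpretation of types\<close>

primrec Red :: "type \<Rightarrow> dterm set" where
  "Red Atom = {t. SN t}"
| "Red (Fun A B) = arrow_red (Red A) (Red B)"
| "Red (Conj A B) = conj_red (Red A) (Red B)"

lemma CR_Red: "CR (Red T)"
  by (induction T) (simp_all add: CR_SN_set CR_arrow_red CR_conj_red)

fun fun_nf :: "type \<Rightarrow> type \<Rightarrow> type" where
  "fun_nf D (Conj X Y) = Conj (fun_nf D X) (fun_nf D Y)"
| "fun_nf D X = Fun D X"

primrec nf :: "type \<Rightarrow> type" where
  "nf Atom = Atom"
| "nf (Fun A B) = fun_nf (nf A) (nf B)"
| "nf (Conj A B) = Conj (nf A) (nf B)"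

lemma nf_cong: "A \<equiv>\<^sub>T B \<Longrightarrow> nf A = nf B"
  by (induction rule: type_eq.induct) auto

lemma App_mem_Red_fun_nf: "t \<in> Red (fun_nf D X) \<Longrightarrow> s \<in> Red D \<Longrightarrow> App t s \<in> Red X"
proof (induction X arbitrary: t)
  case (Conj X Y)
  then have "App (Proj1 t) s \<in> Red X" and "App (Proj2 t) s \<in> Red Y"
    by (simp_all add: conj_red_def)
  then show ?case
    by (simp add: conj_red_def Proj1_App_mem Proj2_App_mem CR_Red CR_SN [OF CR_Red])
qed (simp_all add: arrow_red_def)

lemma Lam_mem_Red_fun_nf:
  "\<forall>s\<in>Red D. subst u s 0 \<in> Red X \<Longrightarrow> Lam u \<in> Red (fun_nf D X)"
proof (induction X arbitrary: u)
  case (Conj X Y)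
  then have "Lam (Proj1 u) \<in> Red (fun_nf D X)" and "Lam (Proj2 u) \<in> Red (fun_nf D Y)"
    by (simp_all add: conj_red_def)
  then show ?case
    by (simp add: conj_red_def Proj1_Lam_mem Proj2_Lam_mem CR_Red)
qed (simp_all only: fun_nf.simps Red.simps(2) [of D] Lam_mem_arrow_red [OF CR_Red CR_Red])

lemma psubst_mem_Red:
  "\<Gamma> \<turnstile> t : A \<Longrightarrow> \<forall>i. \<sigma> i \<in> Red (nf (\<Gamma> i)) \<Longrightarrow> psubst t \<sigma> \<in> Red (nf A)"
proof (induction arbitrary: \<sigma> rule: typing.induct)
  case (conv \<Gamma> t A B)
  then show ?case by (metis nf_cong)
next
  case (abs A \<Gamma> t B)
  have "\<forall>s\<in>Red (nf A). subst (psubst t (shift \<sigma>)) s 0 \<in> Red (nf B)"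
  proof
    fix s assume "s \<in> Red (nf A)"
    then have "\<forall>i. scons s \<sigma> i \<in> Red (nf (cons_env A \<Gamma> i))"
      using abs.prems by (auto simp: scons_def cons_env_def split: nat.split)
    then show "subst (psubst t (shift \<sigma>)) s 0 \<in> Red (nf B)"
      using abs.IH by (simp add: subst_psubst_shift)
  qed
  then show ?case
    by (simp add: Lam_mem_Red_fun_nf)
next
  case (app \<Gamma> t A B s)
  then show ?case
    by (auto intro: App_mem_Red_fun_nf)
next
  case (pair \<Gamma> t A s B)
  then show ?case
    by (simp add: Pair_mem_conj_red CR_Red)
qed (simp_all add: conj_red_def)

theorem theorem4:
  assumes "\<Gamma> \<turnstile> t : A"
  shows "SN t"
proof -
  have "psubst t Var \<in> Red (nf A)"
    using psubst_mem_Red [OF assms] CR_Var [OF CR_Red] by blast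
  then show ?thesis
    using CR_SN [OF CR_Red] by (simp add: psubst_Var)
qed

end
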